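(* Let $p,g_1,\dots,g_m$, $S$, $d$, $R$, $\eta_1,\dots,\eta_m$, $\beta$ and $f_\gamma$ be as in the context. Then, for any $\gamma\in\mathbb{R}$, $\gamma$ is a strict lower bound on the problem $\inf\{p(x): x\in S\}$ (i.e., $p(x)>\gamma$ for all $x\in S$) if and only if the form $f_\gamma$, which is a sum of squares, homogeneous of degree $4d$ and in the $n+m+3$ variables $(x_1,\dots,x_n,s_0,\dots,s_m,s_{m+1},y)$, is positive definite (i.e., $f_\gamma(z)>0$ for all nonzero $z\in\mathbb{R}^{n+m+3}$).
   Context: Let $p,g_1,\dots,g_m$ be real polynomials in $x=(x_1,\dots,x_n)$ and let $S=\{x\in\mathbb{R}^n : g_i(x)\ge 0,\ i=1,\dots,m\}$. Let $d\ge 1$ be the integer such that $2d$ is the smallest even integer larger than or equal to the maximum of the degrees of $p,g_1,\dots,g_m$. Assume there is $R>0$ with $\sum_{i=1}^n x_i^2\le R$ for all $x\in S$ (the paper describes this as $S$ being contained in a ball of radius $R$). Let $\eta_1,\dots,\eta_m$ be real numbers with $g_i(x)\le\eta_i$ for all $x\in S$, and let $\beta$ be a real number with $-p(x)\le\beta$ for all $x\in S$. For a polynomial $q$ in $x$ of degree at most $2d$, $y^{2d}q(x/y)$ denotes the homogenization of $q$ to a form of degree $2d$ in $(x,y)$. For $\gamma\in\mathbb{R}$ define the form in the variables $(x,s,y)=(x_1,\dots,x_n,s_0,\dots,s_{m+1},y)$: $$f_\gamma(x,s,y)=\big(\gamma y^{2d}-y^{2d}p(x/y)-s_0^2y^{2d-2}\big)^2+\sum_{i=1}^m\big(y^{2d}g_i(x/y)-s_i^2y^{2d-2}\big)^2+\Big(\big(R+\textstyle\sum_{i=1}^m\eta_i+\beta+\gamma\big)^d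 y^{2d}-\big(\sum_{i=1}^n x_i^2+\sum_{i=0}^m s_i^2\big)^d-s_{m+1}^{2d}\Big)^2.$$ *)

theory Defs
  imports Complex_Main
begin

text \<open>Real polynomials in the variables x_0,...,x_(n-1) (the paper's x_1..x_n), represented
by a coefficient function on exponent vectors (monomial x^a has exponent vector a).\<close>

definition supp :: "((nat \<Rightarrow> nat) \<Rightarrow> real) \<Rightarrow> (nat \<Rightarrow> nat) set" where
  "supp c = {a. c a \<noteq> 0}"

definition is_poly :: "nat \<Rightarrow> ((nat \<Rightarrow> nat) \<Rightarrow> real) \<Rightarrow> bool" where
  "is_poly n c \<longleftrightarrow> finite (supp c) \<and> (\<forall>a\<in>supp c. \<forall>i\<ge>n. a i = 0)"

definition mdeg :: "nat \<Rightarrow> (nat \<Rightarrow> nat) \<Rightarrow> nat" where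
  "mdeg n a = (\<Sum>i<n. a i)"

definition poly_deg :: "nat \<Rightarrow> ((nat \<Rightarrow> nat) \<Rightarrow> real) \<Rightarrow> nat" where
  "poly_deg n c = Max (insert 0 (mdeg n ` supp c))"

definition peval :: "nat \<Rightarrow> ((nat \<Rightarrow> nat) \<Rightarrow> real) \<Rightarrow> (nat \<Rightarrow> real) \<Rightarrow> real" where
  "peval n c x = (\<Sum>a\<in>supp c. c a * (\<Prod>i<n. x i ^ a i))"

text \<open>Homogenization y^k q(x/y) of a polynomial q of degree at most k.\<close>
definition homog :: "nat \<Rightarrow> nat \<Rightarrow> ((nat \<Rightarrow> nat) \<Rightarrow> real) \<Rightarrow> (nat \<Rightarrow> real) \<Rightarrow> real \<Rightarrow> real" where
  "homog n k c x y = (\<Sum>a\<in>supp c. c a * (\<Prod>i<n. x i ^ a i) * y ^ (k - mdeg n a))"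

text \<open>The form f_gamma(x,s,y); s is indexed by 0..m+1, g and eta by 1..m.\<close>
definition f_gamma :: "nat \<Rightarrow> nat \<Rightarrow> nat \<Rightarrow> ((nat \<Rightarrow> nat) \<Rightarrow> real) \<Rightarrow> (nat \<Rightarrow> (nat \<Rightarrow> nat) \<Rightarrow> real)
    \<Rightarrow> real \<Rightarrow> (nat \<Rightarrow> real) \<Rightarrow> real \<Rightarrow> real \<Rightarrow> (nat \<Rightarrow> real) \<Rightarrow> (nat \<Rightarrow> real) \<Rightarrow> real \<Rightarrow> real" where
  "f_gamma n m d p g R \<eta> \<beta> \<gamma> x s y =
     (\<gamma> * y ^ (2*d) - homog n (2*d) p x y - (s 0)\<^sup>2 * y ^ (2*d - 2))\<^sup>2
   + (\<Sum>i=1..m. (homog n (2*d) (g i) x y - (s i)\<^sup>2 * y ^ (2*d - 2))\<^sup>2)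
   + ((R + (\<Sum>i=1..m. \<eta> i) + \<beta> + \<gamma>) ^ d * y ^ (2*d)
       - ((\<Sum>i<n. (x i)\<^sup>2) + (\<Sum>i\<le>m. (s i)\<^sup>2)) ^ d - (s (m+1)) ^ (2*d))\<^sup>2"

end

theory Submission
  imports Defs
begin

text \<open>The three squared terms of \<open>f\<^sub>\<gamma>\<close> vanish simultaneously exactly when \<open>(x,s,y)\<close> encodes
  a point of \<open>S\<close> with \<open>p \<le> \<gamma>\<close>: for \<open>y \<noteq> 0\<close> the slack variables \<open>s\<^sub>i\<close> certify \<open>g\<^sub>i(x/y) \<ge> 0\<close>
  and \<open>\<gamma> - p(x/y) \<ge> 0\<close>, while for \<open>y = 0\<close> the last term forces \<open>x = 0\<close> and \<open>s = 0\<close>.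
  Conversely, a point \<open>x \<in> S\<close> with \<open>p(x) \<le> \<gamma>\<close> yields a zero at \<open>y = 1\<close>; the ball and the
  bounds \<open>\<eta>\<^sub>i\<close>, \<open>\<beta>\<close> guarantee that the last slack \<open>s\<^sub>m\<^sub>+\<^sub>1\<close> can be chosen real.\<close>

lemma homog_eq_scaled_peval:
  assumes "finite (supp c)" and "poly_deg n c \<le> k" and "y \<noteq> 0"
  shows "homog n k c x y = y ^ k * peval n c (\<lambda>i. x i / y)"
  unfolding homog_def peval_def sum_distrib_left
proof (rule sum.cong[OF refl])
  fix a assume a: "a \<in> supp c"
  have "mdeg n a \<le> poly_deg n c"
    unfolding poly_deg_def using assms(1) a by (intro Max_ge) auto
  with assms(2) have "y ^ k = y ^ (k - mdeg n a) * y ^ mdeg n a"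
    by (simp flip: power_add)
  moreover have "(\<Prod>i<n. (x i / y) ^ a i) = (\<Prod>i<n. x i ^ a i) / y ^ mdeg n a"
    by (simp add: power_divide prod_dividef mdeg_def power_sum)
  ultimately show "c a * (\<Prod>i<n. x i ^ a i) * y ^ (k - mdeg n a) =
      y ^ k * (c a * (\<Prod>i<n. (x i / y) ^ a i))"
    using assms(3) by simp
qed

lemma homog_at_1:
  assumes "finite (supp c)" and "poly_deg n c \<le> k"
  shows "homog n k c x 1 = peval n c x"
  using homog_eq_scaled_peval[OF assms, of 1 x] by simp

lemma f_gamma_nonneg: "0 \<le> f_gamma n m d p g R \<eta> \<beta> \<gamma> x s y"
  unfolding f_gamma_def by (intro add_nonneg_nonneg sum_nonneg) auto

lemma f_gamma_eq_0_iff: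
  "f_gamma n m d p g R \<eta> \<beta> \<gamma> x s y = 0 \<longleftrightarrow>
     \<gamma> * y ^ (2*d) - homog n (2*d) p x y = (s 0)\<^sup>2 * y ^ (2*d - 2)
   \<and> (\<forall>i\<in>{1..m}. homog n (2*d) (g i) x y = (s i)\<^sup>2 * y ^ (2*d - 2))
   \<and> (R + (\<Sum>i=1..m. \<eta> i) + \<beta> + \<gamma>) ^ d * y ^ (2*d)
       = ((\<Sum>i<n. (x i)\<^sup>2) + (\<Sum>i\<le>m. (s i)\<^sup>2)) ^ d + (s (m+1)) ^ (2*d)"
  unfolding f_gamma_def
  by (auto simp add: add_nonneg_eq_0_iff sum_nonneg sum_nonneg_eq_0_iff algebra_simps)

lemma scaled_eq_square_imp_nonneg:
  fixes v t y :: real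
  assumes "d \<ge> 1" and "y \<noteq> 0" and "y ^ (2*d) * v = t\<^sup>2 * y ^ (2*d - 2)"
  shows "0 \<le> v"
proof -
  have "2*d = (2*d - 2) + 2" using assms(1) by simp
  then have "y ^ (2*d) = y ^ (2*d - 2) * y\<^sup>2" by (metis power_add)
  with assms have "y\<^sup>2 * v = t\<^sup>2" by simp
  with assms(2) show ?thesis
    by (metis zero_le_power2 zero_less_power2 zero_le_mult_iff not_le)
qed

lemma f_gamma_eq_0_at_infinity:
  assumes "d \<ge> 1" and "f_gamma n m d p g R \<eta> \<beta> \<gamma> x s 0 = 0"
  shows "(\<forall>i<n. x i = 0) \<and> (\<forall>i\<le>m+1. s i = 0)"
proof -
  define B where "B = (\<Sum>i<n. (x i)\<^sup>2) + (\<Sum>i\<le>m. (s i)\<^sup>2)"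
  have "(R + (\<Sum>i=1..m. \<eta> i) + \<beta> + \<gamma>) ^ d * 0 ^ (2*d) = B ^ d + (s (m+1)) ^ (2*d)"
    using assms(2) unfolding f_gamma_eq_0_iff B_def by blast
  then have "B ^ d + (s (m+1)) ^ (2*d) = 0" using assms(1) by (simp add: power_0_left)
  moreover have "0 \<le> B" unfolding B_def by (intro add_nonneg_nonneg sum_nonneg) auto
  moreover have "0 \<le> (s (m+1)) ^ (2*d)" by (simp add: power_mult)
  ultimately have "B = 0" and last: "s (m+1) = 0"
    using assms(1) by (smt (verit) zero_le_power power_eq_0_iff)+
  then have "\<forall>i<n. x i = 0" and "\<forall>i\<le>m. s i = 0"
    unfolding B_def by (simp_all add: add_nonneg_eq_0_iff sum_nonneg sum_nonneg_eq_0_iff)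
  with last show ?thesis by (auto simp: le_Suc_eq)
qed

lemma f_gamma_eq_0_dehomogenize:
  assumes "d \<ge> 1" and "y \<noteq> 0"
    and p: "finite (supp p)" "poly_deg n p \<le> 2*d"
    and g: "\<forall>i\<in>{1..m}. finite (supp (g i)) \<and> poly_deg n (g i) \<le> 2*d"
    and zero: "f_gamma n m d p g R \<eta> \<beta> \<gamma> x s y = 0"
  shows "\<forall>i\<in>{1..m}. 0 \<le> peval n (g i) (\<lambda>j. x j / y)"
    and "peval n p (\<lambda>j. x j / y) \<le> \<gamma>"
proof -
  from zero have
    "y ^ (2*d) * (\<gamma> - peval n p (\<lambda>j. x j / y)) = (s 0)\<^sup>2 * y ^ (2*d - 2)"
    unfolding f_gamma_eq_0_iff homog_eq_scaled_peval[OF p \<open>y \<noteq> 0\<close>]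
    by (simp add: right_diff_distrib mult.commute)
  then show "peval n p (\<lambda>j. x j / y) \<le> \<gamma>"
    using scaled_eq_square_imp_nonneg[OF assms(1,2)] by fastforce
  show "\<forall>i\<in>{1..m}. 0 \<le> peval n (g i) (\<lambda>j. x j / y)"
  proof
    fix i assume i: "i \<in> {1..m}"
    with zero g have "y ^ (2*d) * peval n (g i) (\<lambda>j. x j / y) = (s i)\<^sup>2 * y ^ (2*d - 2)"
      unfolding f_gamma_eq_0_iff by (simp add: homog_eq_scaled_peval \<open>y \<noteq> 0\<close>)
    then show "0 \<le> peval n (g i) (\<lambda>j. x j / y)"
      using scaled_eq_square_imp_nonneg[OF assms(1,2)] by blast
  qed
qed

lemma f_gamma_vanishes_at_feasible_point:
  assumes "d \<ge> 1"
    and p: "finite (supp p)" "poly_deg n p \<le> 2*d"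
    and g: "\<forall>i\<in>{1..m}. finite (supp (g i)) \<and> poly_deg n (g i) \<le> 2*d"
    and feasible: "\<forall>i\<in>{1..m}. 0 \<le> peval n (g i) x" and below: "peval n p x \<le> \<gamma>"
    and ball: "(\<Sum>i<n. (x i)\<^sup>2) \<le> R"
    and eta: "\<forall>i\<in>{1..m}. peval n (g i) x \<le> \<eta> i" and beta: "- peval n p x \<le> \<beta>"
  shows "\<exists>s. f_gamma n m d p g R \<eta> \<beta> \<gamma> x s 1 = 0"
proof -
  define A where "A = R + (\<Sum>i=1..m. \<eta> i) + \<beta> + \<gamma>"
  define B where "B = (\<Sum>i<n. (x i)\<^sup>2) + (\<gamma> - peval n p x) + (\<Sum>i=1..m. peval n (g i) x)"
  have "0 \<le> B" unfolding B_def using feasible below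
    by (intro add_nonneg_nonneg sum_nonneg) auto
  moreover have "(\<Sum>i=1..m. peval n (g i) x) \<le> (\<Sum>i=1..m. \<eta> i)"
    using eta by (intro sum_mono) auto
  ultimately have B_le: "B ^ d \<le> A ^ d"
    unfolding A_def using ball beta by (intro power_mono) (auto simp: B_def)
  \<comment> \<open>\<open>s\<^sub>0\<close> and \<open>s\<^sub>i\<close> are the slacks of the constraints, \<open>s\<^sub>m\<^sub>+\<^sub>1\<close> the slack of \<open>B \<le> A\<close>.\<close>
  define s where "s i = (if i = 0 then sqrt (\<gamma> - peval n p x)
       else if i \<le> m then sqrt (peval n (g i) x) else root (2*d) (A ^ d - B ^ d))" for i
  have s0: "(s 0)\<^sup>2 = \<gamma> - peval n p x" unfolding s_def using below by simp
  have si: "(s i)\<^sup>2 = peval n (g i) x" if "i \<in> {1..m}" for i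
    unfolding s_def using feasible that by simp
  have "(s (m+1)) ^ (2*d) = A ^ d - B ^ d"
    unfolding s_def using B_le assms(1) by (simp add: real_root_pow_pos2)
  moreover have "{..m} = insert 0 {1..m}" by auto
  then have "(\<Sum>i\<le>m. (s i)\<^sup>2) = (\<gamma> - peval n p x) + (\<Sum>i=1..m. peval n (g i) x)"
    using s0 si by simp
  ultimately have "f_gamma n m d p g R \<eta> \<beta> \<gamma> x s 1 = 0"
    unfolding f_gamma_eq_0_iff A_def B_def using s0 si p g
    by (simp add: homog_at_1 add.assoc)
  then show ?thesis by blast
qed

theorem theorem2p1:
  fixes n m d :: nat and p :: "(nat \<Rightarrow> nat) \<Rightarrow> real" and g :: "nat \<Rightarrow> (nat \<Rightarrow> nat) \<Rightarrow> real"
    and S :: "(nat \<Rightarrow> real) set" and R \<beta> \<gamma> :: real and \<eta> :: "nat \<Rightarrow> real"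
  assumes p_poly: "is_poly n p"
    and g_poly: "\<forall>i\<in>{1..m}. is_poly n (g i)"
    and S_def: "S = {x. \<forall>i\<in>{1..m}. peval n (g i) x \<ge> 0}"
    and d_ge1: "d \<ge> 1"
    and deg_le: "poly_deg n p \<le> 2*d \<and> (\<forall>i\<in>{1..m}. poly_deg n (g i) \<le> 2*d)"
    and d_min: "d = 1 \<or> poly_deg n p > 2*d - 2 \<or> (\<exists>i\<in>{1..m}. poly_deg n (g i) > 2*d - 2)"
    and R_pos: "R > 0"
    and ball: "\<forall>x\<in>S. (\<Sum>i<n. (x i)\<^sup>2) \<le> R"
    and eta: "\<forall>i\<in>{1..m}. \<forall>x\<in>S. peval n (g i) x \<le> \<eta> i"
    and beta: "\<forall>x\<in>S. - peval n p x \<le> \<beta>"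
  shows "(\<forall>x\<in>S. peval n p x > \<gamma>) \<longleftrightarrow>
    (\<forall>x s y. ((\<exists>i<n. x i \<noteq> 0) \<or> (\<exists>i\<le>m+1. s i \<noteq> 0) \<or> y \<noteq> 0)
        \<longrightarrow> f_gamma n m d p g R \<eta> \<beta> \<gamma> x s y > 0)"
proof -
  have p: "finite (supp p)" "poly_deg n p \<le> 2*d"
    using p_poly deg_le by (auto simp: is_poly_def)
  have g: "\<forall>i\<in>{1..m}. finite (supp (g i)) \<and> poly_deg n (g i) \<le> 2*d"
    using g_poly deg_le by (auto simp: is_poly_def)
  have zeros: "(\<exists>x\<in>S. peval n p x \<le> \<gamma>) \<longleftrightarrow>
    (\<exists>x s y. ((\<exists>i<n. x i \<noteq> 0) \<or> (\<exists>i\<le>m+1. s i \<noteq> 0) \<or> y \<noteq> 0)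
        \<and> f_gamma n m d p g R \<eta> \<beta> \<gamma> x s y = 0)" (is "_ \<longleftrightarrow> ?nontrivial_zero")
  proof
    assume "\<exists>x\<in>S. peval n p x \<le> \<gamma>"
    then obtain x s where "f_gamma n m d p g R \<eta> \<beta> \<gamma> x s 1 = 0"
      using f_gamma_vanishes_at_feasible_point[OF d_ge1 p g] ball eta beta S_def by blast
    then show ?nontrivial_zero by force
  next
    assume ?nontrivial_zero
    then obtain x s y where zero: "f_gamma n m d p g R \<eta> \<beta> \<gamma> x s y = 0"
      and nonzero: "(\<exists>i<n. x i \<noteq> 0) \<or> (\<exists>i\<le>m+1. s i \<noteq> 0) \<or> y \<noteq> 0" by blast
    have "y \<noteq> 0"
      using f_gamma_eq_0_at_infinity[OF d_ge1] zero nonzero by blast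
    show "\<exists>x\<in>S. peval n p x \<le> \<gamma>"
      using f_gamma_eq_0_dehomogenize[OF d_ge1 \<open>y \<noteq> 0\<close> p g zero] unfolding S_def by blast
  qed
  have pos_iff: "0 < f_gamma n m d p g R \<eta> \<beta> \<gamma> x s y \<longleftrightarrow> f_gamma n m d p g R \<eta> \<beta> \<gamma> x s y \<noteq> 0"
    for x s y using f_gamma_nonneg by (simp add: order_less_le)
  show ?thesis
    unfolding pos_iff using zeros by (simp add: not_le[symmetric]) blast
qed

end
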